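(* Suppose $\Gamma_1\triangleright W_1\simeq\Gamma_2\triangleright W_2$, where both configurations are well-formed. Then for every channel $c$, if $c$ is idle in $\Gamma_1$ then $c$ is idle in $\Gamma_2$.
   Context: CCCP syntax. Fix a set of channels (ranged over by $c,d$) and a set of values containing data variables $x,y$ and a special error value $\mathtt{err}$; closed values $v,w$ contain no variables, and each closed value $v$ has a transmission time $\delta_v\in\mathbb{N}$ with $\delta_v\ge 1$. Expressions $e$ are built from values; closed expressions evaluate to closed values via $[\![e]\!]$. Station code (processes) is given by $P,Q ::= c!\langle e\rangle.P \mid \lfloor ?c(x).P\rfloor Q \mid \sigma.P \mid \tau.P \mid P+Q \mid [b]P,Q \mid X \mid \mathbf{0} \mid \mathrm{fix}\,X.P$, where $b$ is either $e_1=e_2$ or $\mathrm{exp}(c)$, $[b]P,Q$ is a conditional (then-branch $P$, else-branch $Q$), $\lfloor ?c(x).P\rfloor Q$ is a receiver on $c$ with timeout branch $Q$ ($x$ bound in $P$), $\sigma.P$ is a one-unit delay and $\sigma^n.P$ denotes $n$ nested delays. System terms are $W ::= P \mid \lfloor ?c(x).P\rfloor \mid W_1|W_2 \mid \nu c{:}(n,v).W$, where $\lfloor ?c(x).P\rfloor$ is an active receiver ($x$ bound in $P$) and $\nu c{:}(n,v).W$ restricts $c$ with local channel state $(n,v)$. In $\mathrm{fix}\,X.P$ every occurrence of $X$ in $P$ is guarded, i.e. lies within a broadcast prefix, a receiver continuation, a timeout branch, a $\sigma$-prefix, or a branch of a conditional. Terms are identified up to $\alpha$-conversion. A channel environment is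 a map $\Gamma$ from channels to $\mathbb{N}\times$(closed values); write $\Gamma\vdash_t c:n$ and $\Gamma\vdash_v c:w$ when $\Gamma(c)=(n,w)$; $c$ is idle in $\Gamma$ if $\Gamma\vdash_t c:0$ and exposed otherwise; $\Gamma[c\mapsto(n,v)]$ is $\Gamma$ updated at $c$; $\Gamma\le\Gamma'$ iff for every $c$, $\Gamma\vdash_t c:n$ and $\Gamma'\vdash_t c:m$ imply $n\le m$. A configuration $\Gamma\triangleright W$ is a channel environment together with a closed system term (no free data or process variables). Intensional semantics. Actions $\lambda$ are $c!v$, $c?v$, $\sigma$, $\tau$. The environment update $\lambda(\Gamma)$ is: $\sigma(\Gamma)(c)=(\max(n-1,0),w)$ whenever $\Gamma(c)=(n,w)$; $c!v(\Gamma)$ agrees with $\Gamma$ except at $c$, where it is $(\delta_v,v)$ if $c$ is idle in $\Gamma$ and $(\max(\delta_v,n),\mathtt{err})$ if $\Gamma\vdash_t c:n>0$; $c?v(\Gamma)=c!v(\Gamma)$; $\tau(\Gamma)=\Gamma$. The predicate $\mathrm{rcv}(W,c)$ on terms is: true for $\lfloor ?d(x).P\rfloor Q$ iff $d=c$; $\mathrm{rcv}(P+Q,c)=\mathrm{rcv}(P,c)\vee\mathrm{rcv}(Q,c)$; $\mathrm{rcv}(\mathrm{fix}\,X.P,c)=\mathrm{rcv}(P,c)$; $\mathrm{rcv}(W_1|W_2,c)=\mathrm{rcv}(W_1,c)\vee\mathrm{rcv}(W_2,c)$; $\mathrm{rcv}(\nu d{:}(n,v).W,c)=\mathrm{rcv}(W,c)$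 (with $d\neq c$ by $\alpha$-conversion); false for all other forms (broadcasts, $\tau.P$, $\sigma.P$, conditionals, $X$, $\mathbf 0$, active receivers). Then $\mathrm{rcv}(\Gamma\triangleright W,c)$ holds iff $c$ is idle in $\Gamma$ and $\mathrm{rcv}(W,c)$. Transitions $\Gamma\triangleright W\xrightarrow{\lambda}W'$ are the least relation closed under: (Snd) $[\![e]\!]=v$ implies $\Gamma\triangleright c!\langle e\rangle.P\xrightarrow{c!v}\sigma^{\delta_v}.P$; (Rcv) $c$ idle in $\Gamma$ implies $\Gamma\triangleright\lfloor ?c(x).P\rfloor Q\xrightarrow{c?v}\lfloor ?c(x).P\rfloor$; (RcvIgn) $\neg\mathrm{rcv}(\Gamma\triangleright W,c)$ implies $\Gamma\triangleright W\xrightarrow{c?v}W$; (Sync) $\Gamma\triangleright W_1\xrightarrow{c!v}W_1'$ and $\Gamma\triangleright W_2\xrightarrow{c?v}W_2'$ imply $\Gamma\triangleright W_1|W_2\xrightarrow{c!v}W_1'|W_2'$, and symmetrically; (RcvPar) $\Gamma\triangleright W_i\xrightarrow{c?v}W_i'$ for $i=1,2$ imply $\Gamma\triangleright W_1|W_2\xrightarrow{c?v}W_1'|W_2'$; (TimeNil) $\Gamma\triangleright\mathbf 0\xrightarrow{\sigma}\mathbf 0$; (Sleep) $\Gamma\triangleright\sigma.P\xrightarrow{\sigma}P$; (ActRcv) $\Gamma\vdash_t c:n$, $n>1$ imply $\Gamma\triangleright\lfloor ?c(x).P\rfloor\xrightarrow{\sigma}\lfloor ?c(x).P\rfloor$;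 (EndRcv) $\Gamma\vdash_t c:1$, $\Gamma\vdash_v c:w$ imply $\Gamma\triangleright\lfloor ?c(x).P\rfloor\xrightarrow{\sigma}\{w/x\}P$; (Timeout) $c$ idle in $\Gamma$ implies $\Gamma\triangleright\lfloor ?c(x).P\rfloor Q\xrightarrow{\sigma}Q$; (RcvLate) $c$ exposed in $\Gamma$ implies $\Gamma\triangleright\lfloor ?c(x).P\rfloor Q\xrightarrow{\tau}\lfloor ?c(x).\{\mathtt{err}/x\}P\rfloor$; (Tau) $\Gamma\triangleright\tau.P\xrightarrow{\tau}P$; (Then)/(Else) $\Gamma\triangleright[b]P,Q\xrightarrow{\tau}\sigma.P$ if $[\![b]\!]_\Gamma$ is true and $\xrightarrow{\tau}\sigma.Q$ otherwise, where $[\![e_1=e_2]\!]_\Gamma$ is true iff $[\![e_1]\!]=[\![e_2]\!]$ and $[\![\mathrm{exp}(c)]\!]_\Gamma$ is true iff $c$ is exposed in $\Gamma$; (TimePar) $\Gamma\triangleright W_i\xrightarrow{\sigma}W_i'$ for $i=1,2$ imply $\Gamma\triangleright W_1|W_2\xrightarrow{\sigma}W_1'|W_2'$; (TauPar) $\Gamma\triangleright W_1\xrightarrow{\tau}W_1'$ implies $\Gamma\triangleright W_1|W_2\xrightarrow{\tau}W_1'|W_2$, and symmetrically; (Rec) $\Gamma\triangleright\{\mathrm{fix}\,X.P/X\}P\xrightarrow{\lambda}W$ implies $\Gamma\triangleright\mathrm{fix}\,X.P\xrightarrow{\lambda}W$; (Sum) for $\lambda\in\{\tau,c!v\}$, $\Gamma\triangleright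 P\xrightarrow{\lambda}W$ implies $\Gamma\triangleright P+Q\xrightarrow{\lambda}W$, and symmetrically; (SumTime) $\Gamma\triangleright P\xrightarrow{\sigma}P'$, $\Gamma\triangleright Q\xrightarrow{\sigma}Q'$ imply $\Gamma\triangleright P+Q\xrightarrow{\sigma}P'+Q'$; (SumRcv) $\Gamma\triangleright P\xrightarrow{c?v}W$ and $\mathrm{rcv}(\Gamma\triangleright P,c)$ imply $\Gamma\triangleright P+Q\xrightarrow{c?v}W$, and symmetrically; (ResI) $\Gamma[c\mapsto(n,v)]\triangleright W\xrightarrow{c!w}W'$ implies $\Gamma\triangleright\nu c{:}(n,v).W\xrightarrow{\tau}\nu c{:}(c!w(\Gamma[c\mapsto(n,v)]))(c).W'$; (ResV) $\Gamma[c\mapsto(n,v)]\triangleright W\xrightarrow{\lambda}W'$ with $c$ not occurring in $\lambda$ implies $\Gamma\triangleright\nu c{:}(n,v).W\xrightarrow{\lambda}\nu c{:}(\lambda(\Gamma[c\mapsto(n,v)]))(c).W'$. Reductions. $\Gamma\triangleright W\to\Gamma'\triangleright W'$ iff $\Gamma\triangleright W\xrightarrow{\lambda}W'$ for some $\lambda\in\{c!v,\sigma,\tau\}$ and $\Gamma'=\lambda(\Gamma)$; it is instantaneous ($\to_i$) if $\lambda\neq\sigma$ and timed ($\to_\sigma$) if $\lambda=\sigma$. Reduction barbed congruence. $\Gamma\triangleright W\downarrow_c$ iff $c$ is exposed in $\Gamma$; $\mathcal C\Downarrow_c$ iff $\mathcal C\to^*\mathcal C'$ for some $\mathcal C'$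 with $\mathcal C'\downarrow_c$. A relation $\mathcal R$ on configurations is barb preserving if $\mathcal C_1\mathcal R\mathcal C_2$ and $\mathcal C_1\Downarrow_c$ imply $\mathcal C_2\Downarrow_c$; reduction closed if $\mathcal C_1\mathcal R\mathcal C_2$ and $\mathcal C_1\to\mathcal C_1'$ imply $\mathcal C_2\to^*\mathcal C_2'$ for some $\mathcal C_2'$ with $\mathcal C_1'\mathcal R\mathcal C_2'$; contextual if $(\Gamma_1\triangleright W_1)\mathcal R(\Gamma_2\triangleright W_2)$ implies $(\Gamma_1\triangleright W_1|W)\mathcal R(\Gamma_2\triangleright W_2|W)$ for every closed system term $W$. Reduction barbed congruence $\simeq$ is the largest symmetric relation on configurations that is barb preserving, reduction closed and contextual. Well-formedness. The set of well-formed configurations is the least set such that: $\Gamma\triangleright P$ is well-formed for every closed process $P$; $\Gamma\triangleright\lfloor ?c(x).P\rfloor$ is well-formed whenever $c$ is exposed in $\Gamma$; $\Gamma\triangleright W_1|W_2$ is well-formed whenever $\Gamma\triangleright W_1$ and $\Gamma\triangleright W_2$ are; $\Gamma\triangleright\nu c{:}(n,v).W$ is well-formed whenever $\Gamma[c\mapsto(n,v)]\triangleright W$ is. *)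

theory Defs
  imports Main
begin

section \<open>Syntax of CCCP\<close>

datatype 'd cval = Err | Dat 'd

datatype ('x,'d) val = VVar 'x | VCl "'d cval"

text \<open>Expressions are built from values by operators 'f, interpreted by a
  function I :: 'f => 'd cval list => 'd cval.\<close>
datatype ('x,'d,'f) exp = EVal "('x,'d) val" | EOp 'f "('x,'d,'f) exp list"

datatype ('c,'x,'d,'f) bexp = BEq "('x,'d,'f) exp" "('x,'d,'f) exp" | BExp 'c

text \<open>Processes (station code); 'c channels, 'p process variables.\<close>
datatype ('c,'x,'p,'d,'f) proc =
    PSnd 'c "('x,'d,'f) exp" "('c,'x,'p,'d,'f) proc"          (* c!<e>.P *)
  | PRcv 'c 'x "('c,'x,'p,'d,'f) proc" "('c,'x,'p,'d,'f) proc" (* |?c(x).P| Q *)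
  | PSig "('c,'x,'p,'d,'f) proc"
  | PTau "('c,'x,'p,'d,'f) proc"
  | PSum "('c,'x,'p,'d,'f) proc" "('c,'x,'p,'d,'f) proc"
  | PCond "('c,'x,'d,'f) bexp" "('c,'x,'p,'d,'f) proc" "('c,'x,'p,'d,'f) proc" (* [b]P,Q *)
  | PVar 'p
  | PNil
  | PFix 'p "('c,'x,'p,'d,'f) proc"

datatype ('c,'x,'p,'d,'f) sys =
    SP "('c,'x,'p,'d,'f) proc"
  | SAct 'c 'x "('c,'x,'p,'d,'f) proc"                          (* active receiver |?c(x).P| *)
  | SPar "('c,'x,'p,'d,'f) sys" "('c,'x,'p,'d,'f) sys"
  | SNu 'c nat "'d cval" "('c,'x,'p,'d,'f) sys"                 (* nu c:(n,v).W *)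

fun sigpow :: "nat \<Rightarrow> ('c,'x,'p,'d,'f) proc \<Rightarrow> ('c,'x,'p,'d,'f) proc" where
  "sigpow 0 P = P"
| "sigpow (Suc n) P = PSig (sigpow n P)"

fun fvV :: "('x,'d) val \<Rightarrow> 'x set" where
  "fvV (VVar x) = {x}"
| "fvV (VCl v) = {}"

fun fvE :: "('x,'d,'f) exp \<Rightarrow> 'x set" where
  "fvE (EVal v) = fvV v"
| "fvE (EOp f es) = (\<Union>e\<in>set es. fvE e)"

fun fvB :: "('c,'x,'d,'f) bexp \<Rightarrow> 'x set" where
  "fvB (BEq e1 e2) = fvE e1 \<union> fvE e2"
| "fvB (BExp c) = {}"

fun fvdP :: "('c,'x,'p,'d,'f) proc \<Rightarrow> 'x set" where
  "fvdP (PSnd c e P) = fvE e \<union> fvdP P"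
| "fvdP (PRcv c x P Q) = (fvdP P - {x}) \<union> fvdP Q"
| "fvdP (PSig P) = fvdP P"
| "fvdP (PTau P) = fvdP P"
| "fvdP (PSum P Q) = fvdP P \<union> fvdP Q"
| "fvdP (PCond b P Q) = fvB b \<union> fvdP P \<union> fvdP Q"
| "fvdP (PVar X) = {}"
| "fvdP PNil = {}"
| "fvdP (PFix X P) = fvdP P"

fun fvpP :: "('c,'x,'p,'d,'f) proc \<Rightarrow> 'p set" where
  "fvpP (PSnd c e P) = fvpP P"
| "fvpP (PRcv c x P Q) = fvpP P \<union> fvpP Q"
| "fvpP (PSig P) = fvpP P"
| "fvpP (PTau P) = fvpP P"
| "fvpP (PSum P Q) = fvpP P \<union> fvpP Q"
| "fvpP (PCond b P Q) = fvpP P \<union> fvpP Q"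
| "fvpP (PVar X) = {X}"
| "fvpP PNil = {}"
| "fvpP (PFix X P) = fvpP P - {X}"

fun fvdS :: "('c,'x,'p,'d,'f) sys \<Rightarrow> 'x set" where
  "fvdS (SP P) = fvdP P"
| "fvdS (SAct c x P) = fvdP P - {x}"
| "fvdS (SPar W1 W2) = fvdS W1 \<union> fvdS W2"
| "fvdS (SNu c n v W) = fvdS W"

fun fvpS :: "('c,'x,'p,'d,'f) sys \<Rightarrow> 'p set" where
  "fvpS (SP P) = fvpP P"
| "fvpS (SAct c x P) = fvpP P"
| "fvpS (SPar W1 W2) = fvpS W1 \<union> fvpS W2"
| "fvpS (SNu c n v W) = fvpS W"

fun unguarded :: "'p \<Rightarrow> ('c,'x,'p,'d,'f) proc \<Rightarrow> bool" where
  "unguarded X (PVar Y) = (X = Y)"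
| "unguarded X (PSum P Q) = (unguarded X P \<or> unguarded X Q)"
| "unguarded X (PTau P) = unguarded X P"
| "unguarded X (PFix Y P) = (X \<noteq> Y \<and> unguarded X P)"
| "unguarded X _ = False"

fun guardedP :: "('c,'x,'p,'d,'f) proc \<Rightarrow> bool" where
  "guardedP (PSnd c e P) = guardedP P"
| "guardedP (PRcv c x P Q) = (guardedP P \<and> guardedP Q)"
| "guardedP (PSig P) = guardedP P"
| "guardedP (PTau P) = guardedP P"
| "guardedP (PSum P Q) = (guardedP P \<and> guardedP Q)"
| "guardedP (PCond b P Q) = (guardedP P \<and> guardedP Q)"
| "guardedP (PVar X) = True"
| "guardedP PNil = True"
| "guardedP (PFix X P) = (\<not> unguarded X P \<and> guardedP P)"

fun guardedS :: "('c,'x,'p,'d,'f) sys \<Rightarrow> bool" where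
  "guardedS (SP P) = guardedP P"
| "guardedS (SAct c x P) = guardedP P"
| "guardedS (SPar W1 W2) = (guardedS W1 \<and> guardedS W2)"
| "guardedS (SNu c n v W) = guardedS W"

definition closedS :: "('c,'x,'p,'d,'f) sys \<Rightarrow> bool" where
  "closedS W \<longleftrightarrow> fvdS W = {} \<and> fvpS W = {} \<and> guardedS W"

fun substV :: "'x \<Rightarrow> 'd cval \<Rightarrow> ('x,'d) val \<Rightarrow> ('x,'d) val" where
  "substV x w (VVar y) = (if x = y then VCl w else VVar y)"
| "substV x w (VCl v) = VCl v"

fun substE :: "'x \<Rightarrow> 'd cval \<Rightarrow> ('x,'d,'f) exp \<Rightarrow> ('x,'d,'f) exp" where
  "substE x w (EVal v) = EVal (substV x w v)"
| "substE x w (EOp f es) = EOp f (map (substE x w) es)"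

fun substB :: "'x \<Rightarrow> 'd cval \<Rightarrow> ('c,'x,'d,'f) bexp \<Rightarrow> ('c,'x,'d,'f) bexp" where
  "substB x w (BEq e1 e2) = BEq (substE x w e1) (substE x w e2)"
| "substB x w (BExp c) = BExp c"

text \<open>{w/x}P; since w is closed no capture can occur.\<close>
fun substP :: "'x \<Rightarrow> 'd cval \<Rightarrow> ('c,'x,'p,'d,'f) proc \<Rightarrow> ('c,'x,'p,'d,'f) proc" where
  "substP x w (PSnd c e P) = PSnd c (substE x w e) (substP x w P)"
| "substP x w (PRcv c y P Q) = PRcv c y (if y = x then P else substP x w P) (substP x w Q)"
| "substP x w (PSig P) = PSig (substP x w P)"
| "substP x w (PTau P) = PTau (substP x w P)"
| "substP x w (PSum P Q) = PSum (substP x w P) (substP x w Q)"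
| "substP x w (PCond b P Q) = PCond (substB x w b) (substP x w P) (substP x w Q)"
| "substP x w (PVar X) = PVar X"
| "substP x w PNil = PNil"
| "substP x w (PFix X P) = PFix X (substP x w P)"

text \<open>{R/X}P; used only with R closed, so no capture can occur.\<close>
fun substX :: "'p \<Rightarrow> ('c,'x,'p,'d,'f) proc \<Rightarrow> ('c,'x,'p,'d,'f) proc \<Rightarrow> ('c,'x,'p,'d,'f) proc" where
  "substX X R (PSnd c e P) = PSnd c e (substX X R P)"
| "substX X R (PRcv c y P Q) = PRcv c y (substX X R P) (substX X R Q)"
| "substX X R (PSig P) = PSig (substX X R P)"
| "substX X R (PTau P) = PTau (substX X R P)"
| "substX X R (PSum P Q) = PSum (substX X R P) (substX X R Q)"
| "substX X R (PCond b P Q) = PCond b (substX X R P) (substX X R Q)"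
| "substX X R (PVar Y) = (if X = Y then R else PVar Y)"
| "substX X R PNil = PNil"
| "substX X R (PFix Y P) = (if X = Y then PFix Y P else PFix Y (substX X R P))"

type_synonym ('c,'d) env = "'c \<Rightarrow> nat \<times> 'd cval"

fun evalE :: "('f \<Rightarrow> 'd cval list \<Rightarrow> 'd cval) \<Rightarrow> ('x,'d,'f) exp \<Rightarrow> 'd cval option" where
  "evalE I (EVal (VCl v)) = Some v"
| "evalE I (EVal (VVar x)) = None"
| "evalE I (EOp f es) =
     (if (\<forall>e\<in>set es. evalE I e \<noteq> None) then Some (I f (map (\<lambda>e. the (evalE I e)) es)) else None)"

definition idle :: "('c,'d) env \<Rightarrow> 'c \<Rightarrow> bool" where
  "idle \<Gamma> c \<longleftrightarrow> fst (\<Gamma> c) = 0"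

definition exposed :: "('c,'d) env \<Rightarrow> 'c \<Rightarrow> bool" where
  "exposed \<Gamma> c \<longleftrightarrow> fst (\<Gamma> c) \<noteq> 0"

fun evalB :: "('f \<Rightarrow> 'd cval list \<Rightarrow> 'd cval) \<Rightarrow> ('c,'d) env \<Rightarrow> ('c,'x,'d,'f) bexp \<Rightarrow> bool" where
  "evalB I \<Gamma> (BEq e1 e2) = (evalE I e1 = evalE I e2)"
| "evalB I \<Gamma> (BExp c) = exposed \<Gamma> c"

datatype ('c,'d) act = AOut 'c "'d cval" | AIn 'c "'d cval" | ASig | ATau

fun chans :: "('c,'d) act \<Rightarrow> 'c set" where
  "chans (AOut c v) = {c}"
| "chans (AIn c v) = {c}"
| "chans ASig = {}"
| "chans ATau = {}"

definition sndUpd :: "('d cval \<Rightarrow> nat) \<Rightarrow> 'c \<Rightarrow> 'd cval \<Rightarrow> ('c,'d) env \<Rightarrow> ('c,'d) env" where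
  "sndUpd \<delta> c v \<Gamma> = \<Gamma>(c := (if idle \<Gamma> c then (\<delta> v, v) else (max (\<delta> v) (fst (\<Gamma> c)), Err)))"

fun updA :: "('d cval \<Rightarrow> nat) \<Rightarrow> ('c,'d) act \<Rightarrow> ('c,'d) env \<Rightarrow> ('c,'d) env" where
  "updA \<delta> ASig \<Gamma> = (\<lambda>c. (fst (\<Gamma> c) - 1, snd (\<Gamma> c)))"
| "updA \<delta> (AOut c v) \<Gamma> = sndUpd \<delta> c v \<Gamma>"
| "updA \<delta> (AIn c v) \<Gamma> = sndUpd \<delta> c v \<Gamma>"
| "updA \<delta> ATau \<Gamma> = \<Gamma>"

fun rcvP :: "('c,'x,'p,'d,'f) proc \<Rightarrow> 'c \<Rightarrow> bool" where
  "rcvP (PRcv d x P Q) c = (d = c)"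
| "rcvP (PSum P Q) c = (rcvP P c \<or> rcvP Q c)"
| "rcvP (PFix X P) c = rcvP P c"
| "rcvP _ c = False"

text \<open>For nu d with d = c the bound channel is renamed apart (alpha-conversion),
  so the outer c cannot be received on inside.\<close>
fun rcvS :: "('c,'x,'p,'d,'f) sys \<Rightarrow> 'c \<Rightarrow> bool" where
  "rcvS (SP P) c = rcvP P c"
| "rcvS (SAct d x P) c = False"
| "rcvS (SPar W1 W2) c = (rcvS W1 c \<or> rcvS W2 c)"
| "rcvS (SNu d n v W) c = (d \<noteq> c \<and> rcvS W c)"

definition rcvC :: "('c,'d) env \<Rightarrow> ('c,'x,'p,'d,'f) sys \<Rightarrow> 'c \<Rightarrow> bool" where
  "rcvC \<Gamma> W c \<longleftrightarrow> idle \<Gamma> c \<and> rcvS W c"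

section \<open>Intensional semantics\<close>

inductive trans :: "('f \<Rightarrow> 'd cval list \<Rightarrow> 'd cval) \<Rightarrow> ('d cval \<Rightarrow> nat) \<Rightarrow> ('c,'d) env
    \<Rightarrow> ('c,'x,'p,'d,'f) sys \<Rightarrow> ('c,'d) act \<Rightarrow> ('c,'x,'p,'d,'f) sys \<Rightarrow> bool"
  for I :: "'f \<Rightarrow> 'd cval list \<Rightarrow> 'd cval" and \<delta> :: "'d cval \<Rightarrow> nat" where
  Snd: "evalE I e = Some v \<Longrightarrow> trans I \<delta> \<Gamma> (SP (PSnd c e P)) (AOut c v) (SP (sigpow (\<delta> v) P))"
| Rcv: "idle \<Gamma> c \<Longrightarrow> trans I \<delta> \<Gamma> (SP (PRcv c x P Q)) (AIn c v) (SAct c x P)"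
| RcvIgn: "\<not> rcvC \<Gamma> W c \<Longrightarrow> trans I \<delta> \<Gamma> W (AIn c v) W"
| Sync1: "trans I \<delta> \<Gamma> W1 (AOut c v) W1' \<Longrightarrow> trans I \<delta> \<Gamma> W2 (AIn c v) W2'
          \<Longrightarrow> trans I \<delta> \<Gamma> (SPar W1 W2) (AOut c v) (SPar W1' W2')"
| Sync2: "trans I \<delta> \<Gamma> W1 (AIn c v) W1' \<Longrightarrow> trans I \<delta> \<Gamma> W2 (AOut c v) W2'
          \<Longrightarrow> trans I \<delta> \<Gamma> (SPar W1 W2) (AOut c v) (SPar W1' W2')"
| RcvPar: "trans I \<delta> \<Gamma> W1 (AIn c v) W1' \<Longrightarrow> trans I \<delta> \<Gamma> W2 (AIn c v) W2'
          \<Longrightarrow> trans I \<delta> \<Gamma> (SPar W1 W2) (AIn c v) (SPar W1' W2')"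
| TimeNil: "trans I \<delta> \<Gamma> (SP PNil) ASig (SP PNil)"
| Sleep: "trans I \<delta> \<Gamma> (SP (PSig P)) ASig (SP P)"
| ActRcv: "fst (\<Gamma> c) > 1 \<Longrightarrow> trans I \<delta> \<Gamma> (SAct c x P) ASig (SAct c x P)"
| EndRcv: "\<Gamma> c = (1, w) \<Longrightarrow> trans I \<delta> \<Gamma> (SAct c x P) ASig (SP (substP x w P))"
| Timeout: "idle \<Gamma> c \<Longrightarrow> trans I \<delta> \<Gamma> (SP (PRcv c x P Q)) ASig (SP Q)"
| RcvLate: "exposed \<Gamma> c \<Longrightarrow> trans I \<delta> \<Gamma> (SP (PRcv c x P Q)) ATau (SAct c x (substP x Err P))"
| Tau: "trans I \<delta> \<Gamma> (SP (PTau P)) ATau (SP P)"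
| Then: "evalB I \<Gamma> b \<Longrightarrow> trans I \<delta> \<Gamma> (SP (PCond b P Q)) ATau (SP (PSig P))"
| Else: "\<not> evalB I \<Gamma> b \<Longrightarrow> trans I \<delta> \<Gamma> (SP (PCond b P Q)) ATau (SP (PSig Q))"
| TimePar: "trans I \<delta> \<Gamma> W1 ASig W1' \<Longrightarrow> trans I \<delta> \<Gamma> W2 ASig W2'
          \<Longrightarrow> trans I \<delta> \<Gamma> (SPar W1 W2) ASig (SPar W1' W2')"
| TauPar1: "trans I \<delta> \<Gamma> W1 ATau W1' \<Longrightarrow> trans I \<delta> \<Gamma> (SPar W1 W2) ATau (SPar W1' W2)"
| TauPar2: "trans I \<delta> \<Gamma> W2 ATau W2' \<Longrightarrow> trans I \<delta> \<Gamma> (SPar W1 W2) ATau (SPar W1 W2')"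
| Rec: "trans I \<delta> \<Gamma> (SP (substX X (PFix X P) P)) l W \<Longrightarrow> trans I \<delta> \<Gamma> (SP (PFix X P)) l W"
| Sum1: "trans I \<delta> \<Gamma> (SP P) l W \<Longrightarrow> l = ATau \<or> (\<exists>c v. l = AOut c v)
          \<Longrightarrow> trans I \<delta> \<Gamma> (SP (PSum P Q)) l W"
| Sum2: "trans I \<delta> \<Gamma> (SP Q) l W \<Longrightarrow> l = ATau \<or> (\<exists>c v. l = AOut c v)
          \<Longrightarrow> trans I \<delta> \<Gamma> (SP (PSum P Q)) l W"
| SumTime: "trans I \<delta> \<Gamma> (SP P) ASig (SP P') \<Longrightarrow> trans I \<delta> \<Gamma> (SP Q) ASig (SP Q')
          \<Longrightarrow> trans I \<delta> \<Gamma> (SP (PSum P Q)) ASig (SP (PSum P' Q'))"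
| SumRcv1: "trans I \<delta> \<Gamma> (SP P) (AIn c v) W \<Longrightarrow> rcvC \<Gamma> (SP P) c
          \<Longrightarrow> trans I \<delta> \<Gamma> (SP (PSum P Q)) (AIn c v) W"
| SumRcv2: "trans I \<delta> \<Gamma> (SP Q) (AIn c v) W \<Longrightarrow> rcvC \<Gamma> (SP Q) c
          \<Longrightarrow> trans I \<delta> \<Gamma> (SP (PSum P Q)) (AIn c v) W"
| ResI: "trans I \<delta> (\<Gamma>(c := (n, v))) W (AOut c w) W'
          \<Longrightarrow> trans I \<delta> \<Gamma> (SNu c n v W) ATau
                (SNu c (fst (updA \<delta> (AOut c w) (\<Gamma>(c := (n, v))) c))
                       (snd (updA \<delta> (AOut c w) (\<Gamma>(c := (n, v))) c)) W')"
| ResV: "trans I \<delta> (\<Gamma>(c := (n, v))) W l W' \<Longrightarrow> c \<notin> chans l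
          \<Longrightarrow> trans I \<delta> \<Gamma> (SNu c n v W) l
                (SNu c (fst (updA \<delta> l (\<Gamma>(c := (n, v))) c))
                       (snd (updA \<delta> l (\<Gamma>(c := (n, v))) c)) W')"

section \<open>Reductions and reduction barbed congruence\<close>

type_synonym ('c,'x,'p,'d,'f) config = "('c,'d) env \<times> ('c,'x,'p,'d,'f) sys"

definition red :: "('f \<Rightarrow> 'd cval list \<Rightarrow> 'd cval) \<Rightarrow> ('d cval \<Rightarrow> nat)
    \<Rightarrow> ('c,'x,'p,'d,'f) config \<Rightarrow> ('c,'x,'p,'d,'f) config \<Rightarrow> bool" where
  "red I \<delta> C C' \<longleftrightarrow> (\<exists>l. (\<forall>c v. l \<noteq> AIn c v) \<and> trans I \<delta> (fst C) (snd C) l (snd C')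
                         \<and> fst C' = updA \<delta> l (fst C))"

definition configuration :: "('c,'x,'p,'d,'f) config \<Rightarrow> bool" where
  "configuration C \<longleftrightarrow> closedS (snd C)"

definition barb :: "('c,'x,'p,'d,'f) config \<Rightarrow> 'c \<Rightarrow> bool" where
  "barb C c \<longleftrightarrow> exposed (fst C) c"

definition wbarb :: "('f \<Rightarrow> 'd cval list \<Rightarrow> 'd cval) \<Rightarrow> ('d cval \<Rightarrow> nat)
    \<Rightarrow> ('c,'x,'p,'d,'f) config \<Rightarrow> 'c \<Rightarrow> bool" where
  "wbarb I \<delta> C c \<longleftrightarrow> (\<exists>C'. (red I \<delta>)\<^sup>*\<^sup>* C C' \<and> barb C' c)"

definition barb_preserving where
  "barb_preserving I \<delta> R \<longleftrightarrow> (\<forall>C1 C2 c. R C1 C2 \<longrightarrow> wbarb I \<delta> C1 c \<longrightarrow> wbarb I \<delta> C2 c)"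

definition reduction_closed where
  "reduction_closed I \<delta> R \<longleftrightarrow>
     (\<forall>C1 C2 C1'. R C1 C2 \<longrightarrow> red I \<delta> C1 C1' \<longrightarrow> (\<exists>C2'. (red I \<delta>)\<^sup>*\<^sup>* C2 C2' \<and> R C1' C2'))"

definition contextual :: "(('c,'x,'p,'d,'f) config \<Rightarrow> ('c,'x,'p,'d,'f) config \<Rightarrow> bool) \<Rightarrow> bool" where
  "contextual R \<longleftrightarrow>
     (\<forall>G1 W1 G2 W2 W. R (G1, W1) (G2, W2) \<longrightarrow> closedS W \<longrightarrow> R (G1, SPar W1 W) (G2, SPar W2 W))"

text \<open>Reduction barbed congruence: the largest symmetric, barb preserving,
  reduction closed and contextual relation on configurations, i.e. the union
  of all such relations.\<close>
definition rbc :: "('f \<Rightarrow> 'd cval list \<Rightarrow> 'd cval) \<Rightarrow> ('d cval \<Rightarrow> nat)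
    \<Rightarrow> ('c,'x,'p,'d,'f) config \<Rightarrow> ('c,'x,'p,'d,'f) config \<Rightarrow> bool" where
  "rbc I \<delta> C1 C2 \<longleftrightarrow>
     (\<exists>R. (\<forall>A B. R A B \<longrightarrow> configuration A \<and> configuration B)
        \<and> symp R \<and> barb_preserving I \<delta> R \<and> reduction_closed I \<delta> R \<and> contextual R
        \<and> R C1 C2)"

inductive wf :: "('c,'d) env \<Rightarrow> ('c,'x,'p,'d,'f) sys \<Rightarrow> bool" where
  wfP: "closedS (SP P) \<Longrightarrow> wf \<Gamma> (SP P)"
| wfAct: "exposed \<Gamma> c \<Longrightarrow> wf \<Gamma> (SAct c x P)"
| wfPar: "wf \<Gamma> W1 \<Longrightarrow> wf \<Gamma> W2 \<Longrightarrow> wf \<Gamma> (SPar W1 W2)"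
| wfNu: "wf (\<Gamma>(c := (n, v))) W \<Longrightarrow> wf \<Gamma> (SNu c n v W)"

end

theory Submission
  imports Defs
begin

(*
  Suppose c is idle in \<Gamma>1 but exposed in \<Gamma>2, and pick a channel d not occurring in W1.
  Run both systems in parallel with the tester [exp(c)] B, 0, where B = fix X. d!<err>.X
  broadcasts on d forever.  On the left the test fails and the tester turns into \<sigma>.0, so d
  never occurs in the system again: once time has made d idle, no barb on d is reachable any
  more.  On the right the conditional has no timed transition, so c is still exposed when the
  tester branches; hence every reduct contains the tester in one of the forms [exp(c)] B, 0
  (with c exposed), \<sigma>^j.B or the unfolded B, and from each of them a barb on d is reachable.
  Both arguments need time to pass, which holds because well-formed closed systems are
  well-timed: instantaneous steps strictly decrease a syntactic bound, and a system that cannot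
  take one can let time pass.  Reduction closure and barb preservation of the congruence turn
  the asymmetry into a contradiction.
*)

lemma fvV_substV: "fvV (substV x w v) \<subseteq> fvV v - {x}"
  by (cases v) auto

lemma fvE_substE: "fvE (substE x w e) \<subseteq> fvE e - {x}"
proof (induction e)
  case (EVal v)
  then show ?case using fvV_substV by simp
next
  case (EOp f es)
  then show ?case by fastforce
qed

lemma fvB_substB: "fvB (substB x w b) \<subseteq> fvB b - {x}"
  using fvE_substE by (cases b) fastforce+

lemma fvdP_substP: "fvdP (substP x w P) \<subseteq> fvdP P - {x}"
proof (induction P)
  case (PSnd c e P)
  then show ?case using fvE_substE[of x w e] by auto
next
  case (PCond b P Q)
  then show ?case using fvB_substB[of x w b] by auto
qed auto

lemma fvpP_substP [simp]: "fvpP (substP x w P) = fvpP P"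
  by (induction P) auto

lemma unguarded_substP [simp]: "unguarded Y (substP x w P) = unguarded Y P"
  by (induction P) auto

lemma guardedP_substP [simp]: "guardedP (substP x w P) = guardedP P"
  by (induction P) auto

lemma fvdP_substX: "fvdP (substX X R P) \<subseteq> fvdP P \<union> fvdP R"
  by (induction P) auto

lemma fvpP_substX: "fvpP (substX X R P) \<subseteq> (fvpP P - {X}) \<union> fvpP R"
  by (induction P) auto

lemma unguarded_in_fvpP: "unguarded Y P \<Longrightarrow> Y \<in> fvpP P"
  by (induction P) auto

lemma unguarded_substX: "unguarded Y (substX X R P) \<Longrightarrow> unguarded Y P \<or> unguarded Y R"
  by (induction P) (auto split: if_splits)

lemma guardedP_substX:
  "guardedP P \<Longrightarrow> guardedP R \<Longrightarrow> fvpP R = {} \<Longrightarrow> guardedP (substX X R P)"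
proof (induction P)
  case (PFix Y P)
  then show ?case using unguarded_substX[of Y X R P] unguarded_in_fvpP[of Y R] by auto
qed auto

lemma closedS_SPar [simp]: "closedS (SPar W1 W2) \<longleftrightarrow> closedS W1 \<and> closedS W2"
  by (auto simp: closedS_def)

lemma closedS_SNu [simp]: "closedS (SNu c n v W) \<longleftrightarrow> closedS W"
  by (auto simp: closedS_def)

lemma closedS_SP_simps [simp]:
  "closedS (SP (PSum P Q)) \<longleftrightarrow> closedS (SP P) \<and> closedS (SP Q)"
  "closedS (SP (PSig P)) \<longleftrightarrow> closedS (SP P)"
  "closedS (SP (PTau P)) \<longleftrightarrow> closedS (SP P)"
  "closedS (SP PNil)"
  "closedS (SP (PSnd c e P)) \<longleftrightarrow> fvE e = {} \<and> closedS (SP P)"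
  "closedS (SP (PCond b P Q)) \<longleftrightarrow> fvB b = {} \<and> closedS (SP P) \<and> closedS (SP Q)"
  "closedS (SP (PRcv c x P Q)) \<longleftrightarrow> closedS (SAct c x P) \<and> closedS (SP Q)"
  by (auto simp: closedS_def)

lemma closedS_sigpow [simp]: "closedS (SP (sigpow n P)) \<longleftrightarrow> closedS (SP P)"
proof -
  have "fvdP (sigpow n P) = fvdP P \<and> fvpP (sigpow n P) = fvpP P \<and> guardedP (sigpow n P) = guardedP P"
    by (induction n) auto
  then show ?thesis by (simp add: closedS_def)
qed

lemma closedS_substP: "closedS (SAct c x P) \<Longrightarrow> closedS (SP (substP x w P))"
  using fvdP_substP[of x w P] by (auto simp: closedS_def)

lemma closedS_unfold:
  "closedS (SP (PFix X P)) \<Longrightarrow> closedS (SP (substX X (PFix X P) P))"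
  using fvdP_substX[of X "PFix X P" P] fvpP_substX[of X "PFix X P" P]
    guardedP_substX[of P "PFix X P" X]
  by (auto simp: closedS_def)

lemma closedS_SP_PFix_guarded: "closedS (SP (PFix X P)) \<Longrightarrow> \<not> unguarded X P"
  by (simp add: closedS_def)

lemma evalE_closed: "fvE e = {} \<Longrightarrow> evalE I e \<noteq> None"
proof (induction e)
  case (EVal v)
  then show ?case by (cases v) auto
qed auto

lemma exposed_iff_not_idle: "exposed \<Gamma> c \<longleftrightarrow> \<not> idle \<Gamma> c"
  by (simp add: exposed_def idle_def)

lemma exposed_sndUpd_mono: "exposed \<Gamma> d \<Longrightarrow> exposed (sndUpd \<delta> c v \<Gamma>) d"
  by (auto simp: sndUpd_def exposed_def idle_def)

lemma exposed_sndUpd_self: "\<delta> v \<ge> 1 \<Longrightarrow> exposed (sndUpd \<delta> c v \<Gamma>) c"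
  by (auto simp: sndUpd_def exposed_def idle_def)

lemma updA_restrict_commute:
  "c \<notin> chans l \<Longrightarrow> (updA \<delta> l \<Gamma>)(c := updA \<delta> l (\<Gamma>(c := p)) c) = updA \<delta> l (\<Gamma>(c := p))"
  by (cases l) (auto simp: sndUpd_def idle_def fun_eq_iff)

lemma updA_restrict_self:
  "\<Gamma>(c := updA \<delta> (AOut c w) (\<Gamma>(c := p)) c) = updA \<delta> (AOut c w) (\<Gamma>(c := p))"
  by (auto simp: sndUpd_def fun_eq_iff)

inductive_cases wf_SPE: "wf \<Gamma> (SP P)"
inductive_cases wf_SActE: "wf \<Gamma> (SAct c x P)"
inductive_cases wf_SParE: "wf \<Gamma> (SPar W1 W2)"
inductive_cases wf_SNuE: "wf \<Gamma> (SNu c n v W)"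

lemma wf_SP_iff [simp]: "wf \<Gamma> (SP P) \<longleftrightarrow> closedS (SP P)"
  by (blast elim: wf_SPE intro: wf.wfP)

lemma wf_SAct_iff [simp]: "wf \<Gamma> (SAct c x P) \<longleftrightarrow> exposed \<Gamma> c"
  by (blast elim: wf_SActE intro: wf.wfAct)

lemma wf_SPar_iff [simp]: "wf \<Gamma> (SPar W1 W2) \<longleftrightarrow> wf \<Gamma> W1 \<and> wf \<Gamma> W2"
  by (blast elim: wf_SParE intro: wf.wfPar)

lemma wf_SNu_iff [simp]: "wf \<Gamma> (SNu c n v W) \<longleftrightarrow> wf (\<Gamma>(c := (n, v))) W"
  by (blast elim: wf_SNuE intro: wf.wfNu)

lemma wf_exposed_mono:
  "wf \<Gamma> W \<Longrightarrow> (\<And>c. exposed \<Gamma> c \<Longrightarrow> exposed \<Gamma>' c) \<Longrightarrow> wf \<Gamma>' W"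
proof (induction arbitrary: \<Gamma>' rule: wf.induct)
  case (wfNu \<Gamma> c n v W)
  have "wf (\<Gamma>'(c := (n, v))) W"
    by (rule wfNu.IH) (use wfNu.prems in \<open>auto simp: exposed_def\<close>)
  then show ?case by (rule wf.wfNu)
qed auto

lemma trans_preserves_wf_closed:
  assumes "trans I \<delta> \<Gamma> W l W'" and "\<forall>v. \<delta> v \<ge> 1" and "wf \<Gamma> W" and "closedS W"
  shows "wf (updA \<delta> l \<Gamma>) W' \<and> closedS W'"
  using assms(1,3,4)
proof (induction rule: trans.induct)
  case (Rcv \<Gamma> c x P Q v)
  then show ?case using assms(2) exposed_sndUpd_self[of \<delta> v c \<Gamma>] by auto
next
  case (RcvIgn \<Gamma> W c v)
  have "wf (sndUpd \<delta> c v \<Gamma>) W"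
    using RcvIgn.prems(1) by (rule wf_exposed_mono) (rule exposed_sndUpd_mono)
  with RcvIgn.prems(2) show ?case by simp
next
  case (ActRcv \<Gamma> c x P)
  then show ?case by (auto simp: exposed_def)
next
  case (EndRcv \<Gamma> c w x P)
  then show ?case by (simp add: closedS_substP)
next
  case (RcvLate \<Gamma> c x P Q)
  then show ?case using closedS_substP[of c x P Err] by (auto simp: closedS_def)
next
  case (Rec \<Gamma> X P l W)
  then show ?case using closedS_unfold[OF Rec.prems(2)] by simp
next
  case (ResI \<Gamma> c n v W w W')
  then have "wf (updA \<delta> (AOut c w) (\<Gamma>(c := (n, v)))) W' \<and> closedS W'"
    by (simp only: wf_SNu_iff closedS_SNu)
  then show ?case
    by (simp only: updA.simps(4) wf_SNu_iff closedS_SNu prod.collapse updA_restrict_self)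
next
  case (ResV \<Gamma> c n v W l W')
  then have "wf (updA \<delta> l (\<Gamma>(c := (n, v)))) W' \<and> closedS W'"
    by (simp only: wf_SNu_iff closedS_SNu)
  then show ?case
    by (simp only: wf_SNu_iff closedS_SNu prod.collapse updA_restrict_commute[OF ResV.hyps(2)])
qed simp_all

section \<open>Well-timedness\<close>

definition instantaneous :: "('c,'d) act \<Rightarrow> bool" where
  "instantaneous l \<longleftrightarrow> l = ATau \<or> (\<exists>c v. l = AOut c v)"

(* Bounds the number of instantaneous steps before the process has to let time pass. *)
fun inst_boundP :: "('c,'x,'p,'d,'f) proc \<Rightarrow> nat" where
  "inst_boundP (PSnd c e P) = 1"
| "inst_boundP (PRcv c x P Q) = 1"
| "inst_boundP (PSig P) = 0"
| "inst_boundP (PTau P) = Suc (inst_boundP P)"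
| "inst_boundP (PSum P Q) = inst_boundP P + inst_boundP Q"
| "inst_boundP (PCond b P Q) = 1"
| "inst_boundP (PVar X) = 0"
| "inst_boundP PNil = 0"
| "inst_boundP (PFix X P) = inst_boundP P"

fun inst_boundS :: "('c,'x,'p,'d,'f) sys \<Rightarrow> nat" where
  "inst_boundS (SP P) = inst_boundP P"
| "inst_boundS (SAct c x P) = 0"
| "inst_boundS (SPar W1 W2) = inst_boundS W1 + inst_boundS W2"
| "inst_boundS (SNu c n v W) = inst_boundS W"

(* Size above the first guard: the measure for arguments that unfold guarded recursion. *)
fun spine_size :: "('c,'x,'p,'d,'f) proc \<Rightarrow> nat" where
  "spine_size (PTau P) = Suc (spine_size P)"
| "spine_size (PSum P Q) = Suc (spine_size P + spine_size Q)"
| "spine_size (PFix X P) = Suc (spine_size P)"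
| "spine_size _ = 1"

lemma inst_boundP_substX: "\<not> unguarded X P \<Longrightarrow> inst_boundP (substX X R P) = inst_boundP P"
  by (induction P) auto

lemma spine_size_substX: "\<not> unguarded X P \<Longrightarrow> spine_size (substX X R P) = spine_size P"
  by (induction P) auto

lemma inst_boundP_sigpow: "n \<ge> 1 \<Longrightarrow> inst_boundP (sigpow n P) = 0"
  by (cases n) auto

lemma trans_inst_bound:
  assumes "trans I \<delta> \<Gamma> W l W'" and "\<forall>v. \<delta> v \<ge> 1" and "closedS W"
  shows "(instantaneous l \<longrightarrow> inst_boundS W' < inst_boundS W)
    \<and> (\<forall>c v. l = AIn c v \<longrightarrow> inst_boundS W' \<le> inst_boundS W)"
  using assms(1,3)
proof (induction rule: trans.induct)
  case (Snd e v \<Gamma> c P)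
  then show ?case using assms(2) by (simp add: inst_boundP_sigpow)
next
  case (Rec \<Gamma> X P l W)
  then show ?case
    using closedS_unfold inst_boundP_substX closedS_SP_PFix_guarded by fastforce
qed (auto simp: instantaneous_def)

lemma trans_input_SP:
  assumes "closedS (SP P)"
  shows "\<exists>W'. trans I \<delta> \<Gamma> (SP P) (AIn c v) W'"
  using assms
proof (induction "spine_size P" arbitrary: P rule: less_induct)
  case less
  show ?case
  proof (cases "rcvC \<Gamma> (SP P) c")
    case False
    then show ?thesis by (blast intro: trans.RcvIgn)
  next
    case True
    then have idle: "idle \<Gamma> c" and rcv: "rcvP P c" by (auto simp: rcvC_def)
    show ?thesis
    proof (cases P)
      case (PRcv d x P1 Q1)
      then have "d = c" using rcv by simp
      then have "trans I \<delta> \<Gamma> (SP P) (AIn c v) (SAct c x P1)"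
        using PRcv idle by (simp add: trans.Rcv)
      then show ?thesis ..
    next
      case (PSum P1 Q1)
      have "spine_size P1 < spine_size P" "spine_size Q1 < spine_size P"
        and "closedS (SP P1)" "closedS (SP Q1)"
        using PSum less.prems by simp_all
      then obtain W1 W2 where "trans I \<delta> \<Gamma> (SP P1) (AIn c v) W1" "trans I \<delta> \<Gamma> (SP Q1) (AIn c v) W2"
        using less.hyps by meson
      moreover have "rcvC \<Gamma> (SP P1) c \<or> rcvC \<Gamma> (SP Q1) c"
        using PSum rcv idle by (simp add: rcvC_def)
      ultimately show ?thesis unfolding PSum by (blast intro: trans.SumRcv1 trans.SumRcv2)
    next
      case (PFix X P1)
      have "spine_size (substX X (PFix X P1) P1) < spine_size P"
        using PFix less.prems closedS_SP_PFix_guarded spine_size_substX by fastforce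
      moreover have "closedS (SP (substX X (PFix X P1) P1))"
        using PFix less.prems by (simp add: closedS_unfold)
      ultimately obtain W' where "trans I \<delta> \<Gamma> (SP (substX X (PFix X P1) P1)) (AIn c v) W'"
        using less.hyps by blast
      then show ?thesis unfolding PFix by (blast intro: trans.Rec)
    qed (use rcv in auto)
  qed
qed

lemma trans_input:
  "closedS W \<Longrightarrow> \<exists>W'. trans I \<delta> \<Gamma> W (AIn c v) W'"
proof (induction W arbitrary: \<Gamma>)
  case (SP P)
  then show ?case by (rule trans_input_SP)
next
  case (SAct d x P)
  have "\<not> rcvC \<Gamma> (SAct d x P) c" by (simp add: rcvC_def)
  then show ?case by (blast intro: trans.RcvIgn)
next
  case (SPar W1 W2)
  then obtain W1' W2' where "trans I \<delta> \<Gamma> W1 (AIn c v) W1'" "trans I \<delta> \<Gamma> W2 (AIn c v) W2'"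
    by (meson closedS_SPar)
  then show ?case by (blast intro: trans.RcvPar)
next
  case (SNu d n u W)
  show ?case
  proof (cases "d = c")
    case True
    then have "\<not> rcvC \<Gamma> (SNu d n u W) c" by (simp add: rcvC_def)
    then show ?thesis by (blast intro: trans.RcvIgn)
  next
    case False
    obtain W' where "trans I \<delta> (\<Gamma>(d := (n, u))) W (AIn c v) W'" using SNu by auto
    moreover have "d \<notin> chans (AIn c v)" using False by simp
    ultimately show ?thesis by (blast intro: trans.ResV)
  qed
qed

lemma trans_Sum1_inst:
  "instantaneous l \<Longrightarrow> trans I \<delta> \<Gamma> (SP P) l W \<Longrightarrow> trans I \<delta> \<Gamma> (SP (PSum P Q)) l W"
  by (simp add: instantaneous_def trans.Sum1)

lemma trans_Sum2_inst:
  "instantaneous l \<Longrightarrow> trans I \<delta> \<Gamma> (SP Q) l W \<Longrightarrow> trans I \<delta> \<Gamma> (SP (PSum P Q)) l W"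
  by (simp add: instantaneous_def trans.Sum2)

lemma trans_progress_SP:
  assumes "closedS (SP P)"
  shows "(\<exists>P'. trans I \<delta> \<Gamma> (SP P) ASig (SP P')) \<or> (\<exists>l W'. instantaneous l \<and> trans I \<delta> \<Gamma> (SP P) l W')"
  using assms
proof (induction "spine_size P" arbitrary: P rule: less_induct)
  case less
  show ?case
  proof (cases P)
    case (PSnd c e Q)
    then obtain v where "evalE I e = Some v" using less.prems evalE_closed by fastforce
    then have "trans I \<delta> \<Gamma> (SP P) (AOut c v) (SP (sigpow (\<delta> v) Q))" using PSnd by (simp add: trans.Snd)
    then show ?thesis by (auto simp: instantaneous_def)
  next
    case (PRcv c x Q1 Q2)
    show ?thesis
    proof (cases "idle \<Gamma> c")
      case True
      then have "trans I \<delta> \<Gamma> (SP P) ASig (SP Q2)" using PRcv by (simp add: trans.Timeout)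
      then show ?thesis by blast
    next
      case False
      then have "trans I \<delta> \<Gamma> (SP P) ATau (SAct c x (substP x Err Q1))"
        using PRcv by (simp add: trans.RcvLate exposed_iff_not_idle)
      then show ?thesis by (auto simp: instantaneous_def)
    qed
  next
    case (PSig Q)
    then show ?thesis by (blast intro: trans.Sleep)
  next
    case (PTau Q)
    then have "trans I \<delta> \<Gamma> (SP P) ATau (SP Q)" by (simp add: trans.Tau)
    then show ?thesis by (auto simp: instantaneous_def)
  next
    case (PSum P1 P2)
    have "spine_size P1 < spine_size P" "spine_size P2 < spine_size P"
      and "closedS (SP P1)" "closedS (SP P2)"
      using PSum less.prems by simp_all
    then have "(\<exists>P'. trans I \<delta> \<Gamma> (SP P1) ASig (SP P')) \<or> (\<exists>l W'. instantaneous l \<and> trans I \<delta> \<Gamma> (SP P1) l W')"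
      and "(\<exists>P'. trans I \<delta> \<Gamma> (SP P2) ASig (SP P')) \<or> (\<exists>l W'. instantaneous l \<and> trans I \<delta> \<Gamma> (SP P2) l W')"
      using less.hyps by blast+
    then show ?thesis
      unfolding PSum by (blast intro: trans_Sum1_inst trans_Sum2_inst trans.SumTime)
  next
    case (PCond b Q1 Q2)
    then show ?thesis
      by (cases "evalB I \<Gamma> b") (auto simp: instantaneous_def intro: trans.Then trans.Else)
  next
    case (PVar X)
    then show ?thesis using less.prems by (simp add: closedS_def)
  next
    case PNil
    then show ?thesis by (blast intro: trans.TimeNil)
  next
    case (PFix X Q)
    have "spine_size (substX X (PFix X Q) Q) < spine_size P"
      using PFix less.prems closedS_SP_PFix_guarded spine_size_substX by fastforce
    moreover have "closedS (SP (substX X (PFix X Q) Q))"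
      using PFix less.prems by (simp add: closedS_unfold)
    ultimately have "(\<exists>P'. trans I \<delta> \<Gamma> (SP (substX X (PFix X Q) Q)) ASig (SP P'))
        \<or> (\<exists>l W'. instantaneous l \<and> trans I \<delta> \<Gamma> (SP (substX X (PFix X Q) Q)) l W')"
      using less.hyps by blast
    then show ?thesis unfolding PFix by (blast intro: trans.Rec)
  qed
qed

lemma trans_progress:
  assumes "wf \<Gamma> W" and "closedS W"
  shows "(\<exists>W'. trans I \<delta> \<Gamma> W ASig W') \<or> (\<exists>l W'. instantaneous l \<and> trans I \<delta> \<Gamma> W l W')"
  using assms
proof (induction W arbitrary: \<Gamma> rule: sys.induct)
  case (SP P)
  then show ?case using trans_progress_SP[of P I \<delta> \<Gamma>] by blast
next
  case (SAct c x P)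
  then have "exposed \<Gamma> c" by simp
  then have "fst (\<Gamma> c) > 1 \<or> \<Gamma> c = (1, snd (\<Gamma> c))"
    by (auto simp: exposed_def prod_eq_iff)
  then show ?case by (blast intro: trans.ActRcv trans.EndRcv)
next
  case (SPar W1 W2)
  have sync: "\<exists>W'. trans I \<delta> \<Gamma> (SPar W1 W2) l W'"
    if "instantaneous l" and "trans I \<delta> \<Gamma> Wi l Wi'" and "Wi = W1 \<or> Wi = W2" for l Wi Wi'
  proof -
    consider "l = ATau" | c v where "l = AOut c v"
      using \<open>instantaneous l\<close> by (auto simp: instantaneous_def)
    then show ?thesis
    proof cases
      case 1
      then show ?thesis using that by (blast intro: trans.TauPar1 trans.TauPar2)
    next
      case 2
      obtain W1' W2' where "trans I \<delta> \<Gamma> W1 (AIn c v) W1'" "trans I \<delta> \<Gamma> W2 (AIn c v) W2'"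
        using SPar.prems(2) trans_input by (meson closedS_SPar)
      then show ?thesis using that 2 by (blast intro: trans.Sync1 trans.Sync2)
    qed
  qed
  have "(\<exists>W'. trans I \<delta> \<Gamma> W1 ASig W') \<or> (\<exists>l W'. instantaneous l \<and> trans I \<delta> \<Gamma> W1 l W')"
    and "(\<exists>W'. trans I \<delta> \<Gamma> W2 ASig W') \<or> (\<exists>l W'. instantaneous l \<and> trans I \<delta> \<Gamma> W2 l W')"
    using SPar by simp_all
  then show ?case
    using sync[of _ W1] sync[of _ W2] by (meson trans.TimePar)
next
  case (SNu c n v W)
  then have "(\<exists>W'. trans I \<delta> (\<Gamma>(c := (n, v))) W ASig W')
      \<or> (\<exists>l W'. instantaneous l \<and> trans I \<delta> (\<Gamma>(c := (n, v))) W l W')"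
    by simp
  then show ?case
  proof (elim disjE exE conjE)
    fix W' assume "trans I \<delta> (\<Gamma>(c := (n, v))) W ASig W'"
    then show ?thesis using trans.ResV[of I \<delta> \<Gamma> c n v W ASig W'] by auto
  next
    fix l W' assume l: "instantaneous l" "trans I \<delta> (\<Gamma>(c := (n, v))) W l W'"
    show ?thesis
    proof (cases "c \<in> chans l")
      case True
      then obtain w where "l = AOut c w" using l(1) by (auto simp: instantaneous_def)
      then show ?thesis using trans.ResI[of I \<delta> \<Gamma> c n v W w W'] l(2)
        by (auto simp: instantaneous_def)
    next
      case False
      then show ?thesis using trans.ResV[OF l(2) False] l(1) by blast
    qed
  qed
qed

definition ired :: "('f \<Rightarrow> 'd cval list \<Rightarrow> 'd cval) \<Rightarrow> ('d cval \<Rightarrow> nat)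
    \<Rightarrow> ('c,'x,'p,'d,'f) config \<Rightarrow> ('c,'x,'p,'d,'f) config \<Rightarrow> bool" where
  "ired I \<delta> C C' \<longleftrightarrow>
     (\<exists>l. instantaneous l \<and> trans I \<delta> (fst C) (snd C) l (snd C') \<and> fst C' = updA \<delta> l (fst C))"

lemma ired_imp_red: "ired I \<delta> C C' \<Longrightarrow> red I \<delta> C C'"
  by (auto simp: ired_def red_def instantaneous_def)

lemma ireds_imp_reds: "(ired I \<delta>)\<^sup>*\<^sup>* C C' \<Longrightarrow> (red I \<delta>)\<^sup>*\<^sup>* C C'"
  by (metis ired_imp_red mono_rtranclp)

lemma well_timed:
  assumes "\<forall>v. \<delta> v \<ge> 1" and "wf \<Gamma> W" and "closedS W"
  shows "\<exists>\<Gamma>' W' W''. (ired I \<delta>)\<^sup>*\<^sup>* (\<Gamma>, W) (\<Gamma>', W') \<and> wf \<Gamma>' W' \<and> closedS W'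
    \<and> trans I \<delta> \<Gamma>' W' ASig W''"
  using assms(2,3)
proof (induction "inst_boundS W" arbitrary: \<Gamma> W rule: less_induct)
  case less
  from trans_progress[OF less.prems, of I \<delta>] show ?case
  proof (elim disjE exE conjE)
    fix W' assume "trans I \<delta> \<Gamma> W ASig W'"
    then show ?thesis using less.prems by blast
  next
    fix l W' assume l: "instantaneous l" "trans I \<delta> \<Gamma> W l W'"
    have "inst_boundS W' < inst_boundS W"
      using trans_inst_bound[OF l(2) assms(1) less.prems(2)] l(1) by blast
    moreover have "wf (updA \<delta> l \<Gamma>) W' \<and> closedS W'"
      using trans_preserves_wf_closed[OF l(2) assms(1) less.prems] .
    ultimately obtain \<Gamma>' W1 W2 where
      "(ired I \<delta>)\<^sup>*\<^sup>* (updA \<delta> l \<Gamma>, W') (\<Gamma>', W1)" "wf \<Gamma>' W1" "closedS W1"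
      "trans I \<delta> \<Gamma>' W1 ASig W2"
      using less.hyps by blast
    moreover have "ired I \<delta> (\<Gamma>, W) (updA \<delta> l \<Gamma>, W')"
      using l by (auto simp: ired_def)
    ultimately show ?thesis by (blast intro: converse_rtranclp_into_rtranclp)
  qed
qed

section \<open>Fresh channels\<close>

fun chansB :: "('c,'x,'d,'f) bexp \<Rightarrow> 'c set" where
  "chansB (BEq e1 e2) = {}"
| "chansB (BExp c) = {c}"

fun chansP :: "('c,'x,'p,'d,'f) proc \<Rightarrow> 'c set" where
  "chansP (PSnd c e P) = insert c (chansP P)"
| "chansP (PRcv c x P Q) = insert c (chansP P \<union> chansP Q)"
| "chansP (PSig P) = chansP P"
| "chansP (PTau P) = chansP P"
| "chansP (PSum P Q) = chansP P \<union> chansP Q"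
| "chansP (PCond b P Q) = chansB b \<union> chansP P \<union> chansP Q"
| "chansP (PVar X) = {}"
| "chansP PNil = {}"
| "chansP (PFix X P) = chansP P"

fun chansS :: "('c,'x,'p,'d,'f) sys \<Rightarrow> 'c set" where
  "chansS (SP P) = chansP P"
| "chansS (SAct c x P) = insert c (chansP P)"
| "chansS (SPar W1 W2) = chansS W1 \<union> chansS W2"
| "chansS (SNu c n v W) = insert c (chansS W)"

lemma chansB_substB [simp]: "chansB (substB x w b) = chansB b"
  by (cases b) auto

lemma chansP_substP [simp]: "chansP (substP x w P) = chansP P"
  by (induction P) auto

lemma chansP_substX: "chansP (substX X R P) \<subseteq> chansP P \<union> chansP R"
  by (induction P) auto

lemma chansP_sigpow [simp]: "chansP (sigpow n P) = chansP P"
  by (induction n) auto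

lemma finite_chansB: "finite (chansB b)"
  by (cases b) auto

lemma finite_chansP: "finite (chansP P)"
  by (induction P) (auto simp: finite_chansB)

lemma finite_chansS: "finite (chansS W)"
  by (induction W) (auto simp: finite_chansP)

lemma trans_chansS:
  assumes "trans I \<delta> \<Gamma> W l W'"
  shows "chansS W' \<subseteq> chansS W \<and> (\<forall>c v. l = AOut c v \<longrightarrow> c \<in> chansS W)"
  using assms
proof (induction rule: trans.induct)
  case (Rec \<Gamma> X P l W)
  then show ?case using chansP_substX[of X "PFix X P" P] by auto
qed auto

lemma sndUpd_other: "e \<noteq> d \<Longrightarrow> sndUpd \<delta> e v \<Gamma> d = \<Gamma> d"
  by (simp add: sndUpd_def)

lemma trans_fresh_env:
  assumes "trans I \<delta> \<Gamma> W l W'" and "d \<notin> chansS W" and "\<forall>c v. l \<noteq> AIn c v"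
  shows "d \<notin> chansS W' \<and> fst (updA \<delta> l \<Gamma> d) \<le> fst (\<Gamma> d) \<and> (l \<noteq> ASig \<longrightarrow> updA \<delta> l \<Gamma> d = \<Gamma> d)"
proof -
  have "l = AOut c v \<Longrightarrow> c \<noteq> d" for c v
    using trans_chansS[OF assms(1)] assms(2) by auto
  then show ?thesis
    using trans_chansS[OF assms(1)] assms(2,3) by (cases l) (auto simp: sndUpd_other)
qed

lemma ireds_fresh:
  "(ired I \<delta>)\<^sup>*\<^sup>* C C' \<Longrightarrow> d \<notin> chansS (snd C) \<Longrightarrow> d \<notin> chansS (snd C') \<and> fst C' d = fst C d"
proof (induction rule: rtranclp_induct)
  case (step C1 C2)
  then obtain l where l: "instantaneous l" "trans I \<delta> (fst C1) (snd C1) l (snd C2)"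
    and env: "fst C2 = updA \<delta> l (fst C1)"
    by (auto simp: ired_def)
  have "\<forall>c v. l \<noteq> AIn c v" "l \<noteq> ASig" using l(1) by (auto simp: instantaneous_def)
  then show ?case using trans_fresh_env[OF l(2)] step env by auto
qed simp

lemma reds_fresh_idle:
  "(red I \<delta>)\<^sup>*\<^sup>* C C' \<Longrightarrow> d \<notin> chansS (snd C) \<Longrightarrow> idle (fst C) d
    \<Longrightarrow> d \<notin> chansS (snd C') \<and> idle (fst C') d"
proof (induction rule: rtranclp_induct)
  case (step C1 C2)
  then obtain l where "\<forall>c v. l \<noteq> AIn c v" "trans I \<delta> (fst C1) (snd C1) l (snd C2)"
    and env: "fst C2 = updA \<delta> l (fst C1)"
    by (auto simp: red_def)
  then show ?case using trans_fresh_env[of I \<delta> "fst C1" "snd C1" l "snd C2" d] step env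
    by (auto simp: idle_def)
qed simp

lemma fresh_idle_not_wbarb: "d \<notin> chansS (snd C) \<Longrightarrow> idle (fst C) d \<Longrightarrow> \<not> wbarb I \<delta> C d"
  using reds_fresh_idle[of I \<delta> C _ d] by (auto simp: wbarb_def barb_def exposed_iff_not_idle)

lemma fresh_channel_silenced:
  assumes "\<forall>v. \<delta> v \<ge> 1" and "wf \<Gamma> W" and "closedS W" and "d \<notin> chansS W"
  shows "\<exists>C'. (red I \<delta>)\<^sup>*\<^sup>* (\<Gamma>, W) C' \<and> \<not> wbarb I \<delta> C' d"
  using assms(2-4)
proof (induction "fst (\<Gamma> d)" arbitrary: \<Gamma> W rule: less_induct)
  case less
  show ?case
  proof (cases "idle \<Gamma> d")
    case True
    then show ?thesis using less.prems fresh_idle_not_wbarb[of d "(\<Gamma>, W)"] by auto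
  next
    case False
    obtain \<Gamma>' W' W'' where steps: "(ired I \<delta>)\<^sup>*\<^sup>* (\<Gamma>, W) (\<Gamma>', W')" and "wf \<Gamma>' W'" "closedS W'"
      and tick: "trans I \<delta> \<Gamma>' W' ASig W''"
      using well_timed[OF assms(1) less.prems(1,2)] by blast
    have "d \<notin> chansS W'" "\<Gamma>' d = \<Gamma> d" using ireds_fresh[OF steps] less.prems(3) by auto
    then have "d \<notin> chansS W''" "fst (updA \<delta> ASig \<Gamma>' d) < fst (\<Gamma> d)"
      using trans_chansS[OF tick] False by (auto simp: idle_def)
    moreover have "wf (updA \<delta> ASig \<Gamma>') W'' \<and> closedS W''"
      using trans_preserves_wf_closed[OF tick assms(1)] \<open>wf \<Gamma>' W'\<close> \<open>closedS W'\<close> by blast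
    ultimately obtain C' where "(red I \<delta>)\<^sup>*\<^sup>* (updA \<delta> ASig \<Gamma>', W'') C'" "\<not> wbarb I \<delta> C' d"
      using less.hyps by blast
    moreover have "red I \<delta> (\<Gamma>', W') (updA \<delta> ASig \<Gamma>', W'')"
      using tick by (auto simp: red_def)
    ultimately show ?thesis
      using ireds_imp_reds[OF steps] by (meson converse_rtranclp_into_rtranclp rtranclp_trans)
  qed
qed

lemma rbc_configuration: "rbc I \<delta> C1 C2 \<Longrightarrow> configuration C1 \<and> configuration C2"
  unfolding rbc_def by blast

lemma rbc_contextual:
  "rbc I \<delta> (\<Gamma>1, W1) (\<Gamma>2, W2) \<Longrightarrow> closedS W \<Longrightarrow> rbc I \<delta> (\<Gamma>1, SPar W1 W) (\<Gamma>2, SPar W2 W)"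
  unfolding rbc_def contextual_def by blast

lemma rbc_reds:
  "(red I \<delta>)\<^sup>*\<^sup>* C1 C1' \<Longrightarrow> rbc I \<delta> C1 C2 \<Longrightarrow> \<exists>C2'. (red I \<delta>)\<^sup>*\<^sup>* C2 C2' \<and> rbc I \<delta> C1' C2'"
proof (induction arbitrary: C2 rule: rtranclp_induct)
  case (step C1' C1'')
  then obtain C2' where "(red I \<delta>)\<^sup>*\<^sup>* C2 C2'" "rbc I \<delta> C1' C2'" by blast
  moreover from \<open>rbc I \<delta> C1' C2'\<close> \<open>red I \<delta> C1' C1''\<close>
  obtain C2'' where "(red I \<delta>)\<^sup>*\<^sup>* C2' C2''" "rbc I \<delta> C1'' C2''"
    unfolding rbc_def reduction_closed_def by blast
  ultimately show ?case by (meson rtranclp_trans)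
qed blast

lemma rbc_wbarb: "rbc I \<delta> C1 C2 \<Longrightarrow> wbarb I \<delta> C2 c \<Longrightarrow> wbarb I \<delta> C1 c"
  unfolding rbc_def barb_preserving_def by (blast dest: sympD)

lemma wbarb_reds: "(red I \<delta>)\<^sup>*\<^sup>* C C' \<Longrightarrow> wbarb I \<delta> C' d \<Longrightarrow> wbarb I \<delta> C d"
  unfolding wbarb_def by (meson rtranclp_trans)

section \<open>A context observing exposure\<close>

definition beacon_step :: "'c \<Rightarrow> ('c,'x,'p,'d,'f) proc \<Rightarrow> ('c,'x,'p,'d,'f) proc" where
  "beacon_step d P = PSnd d (EVal (VCl Err)) P"

(* 'p is arbitrary, so undefined is the only name available for the recursion variable. *)
definition beacon :: "'c \<Rightarrow> ('c,'x,'p,'d,'f) proc" where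
  "beacon d = PFix undefined (beacon_step d (PVar undefined))"

definition tester :: "'c \<Rightarrow> 'c \<Rightarrow> ('c,'x,'p,'d,'f) sys" where
  "tester c d = SP (PCond (BExp c) (beacon d) PNil)"

definition tester_state :: "('c,'d) env \<Rightarrow> 'c \<Rightarrow> 'c \<Rightarrow> ('c,'x,'p,'d,'f) sys \<Rightarrow> bool" where
  "tester_state \<Gamma> c d T \<longleftrightarrow>
     (T = tester c d \<and> exposed \<Gamma> c) \<or> (\<exists>j. T = SP (sigpow j (beacon d)))
     \<or> T = SP (beacon_step d (beacon d))"

lemma unfold_beacon: "substX undefined (beacon d) (beacon_step d (PVar undefined)) = beacon_step d (beacon d)"
  by (simp add: beacon_step_def)

lemma closedS_beacon [simp]: "closedS (SP (beacon d))"
  by (simp add: beacon_def beacon_step_def closedS_def)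

lemma closedS_tester: "closedS (tester c d)"
  by (simp add: tester_def)

inductive_cases trans_PCondE: "trans I \<delta> \<Gamma> (SP (PCond b P Q)) l W"
inductive_cases trans_PSigE: "trans I \<delta> \<Gamma> (SP (PSig P)) l W"
inductive_cases trans_PFixE: "trans I \<delta> \<Gamma> (SP (PFix X P)) l W"
inductive_cases trans_PSndE: "trans I \<delta> \<Gamma> (SP (PSnd c e P)) l W"
inductive_cases trans_SParE [consumes 1, case_names RcvIgn Sync1 Sync2 RcvPar TimePar TauPar1 TauPar2]:
  "trans I \<delta> \<Gamma> (SPar W1 W2) l W"

lemma trans_beacon_step:
  "trans I \<delta> \<Gamma> (SP (beacon_step d (beacon d))) l T \<Longrightarrow> tester_state \<Gamma>' c d T"
  unfolding beacon_step_def
  by (erule trans_PSndE) (auto simp: tester_state_def beacon_step_def)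

lemma trans_beacon:
  assumes "trans I \<delta> \<Gamma> (SP (beacon d)) l T"
  shows "tester_state \<Gamma>' c d T"
proof -
  have "T = SP (sigpow 0 (beacon d)) \<or> trans I \<delta> \<Gamma> (SP (beacon_step d (beacon d))) l T"
    using assms unfolding beacon_def
    by (elim trans_PFixE) (simp_all add: unfold_beacon[unfolded beacon_def])
  then show ?thesis by (metis trans_beacon_step tester_state_def)
qed

lemma tester_state_step:
  assumes "trans I \<delta> \<Gamma> T l T'" and "tester_state \<Gamma> c d T"
  shows "tester_state (updA \<delta> l \<Gamma>) c d T'"
proof -
  consider "T = tester c d" "exposed \<Gamma> c" | j where "T = SP (sigpow j (beacon d))"
    | "T = SP (beacon_step d (beacon d))"
    using assms(2) unfolding tester_state_def by blast
  then show ?thesis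
  proof cases
    case 1
    from assms(1) show ?thesis
      unfolding 1 tester_def
    proof (elim trans_PCondE)
      fix e v assume "l = AIn e v" "T' = SP (PCond (BExp c) (beacon d) PNil)"
      then show ?thesis using exposed_sndUpd_mono[OF 1(2)] by (simp add: tester_state_def tester_def)
    next
      assume "T' = SP (PSig (beacon d))"
      then show ?thesis unfolding tester_state_def by (metis sigpow.simps)
    qed (use 1 in simp)
  next
    case (2 j)
    then show ?thesis
    proof (cases j)
      case 0
      then show ?thesis using 2 assms(1) trans_beacon by simp
    next
      case (Suc k)
      from assms(1) show ?thesis
        unfolding 2 Suc sigpow.simps
        by (elim trans_PSigE) (metis tester_state_def sigpow.simps(2))+
    qed
  next
    case 3
    then show ?thesis using assms(1) trans_beacon_step by simp
  qed
qed

definition tester_inv :: "'c \<Rightarrow> 'c \<Rightarrow> ('c,'x,'p,'d,'f) config \<Rightarrow> bool" where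
  "tester_inv c d C \<longleftrightarrow>
     (\<exists>W T. snd C = SPar W T \<and> wf (fst C) W \<and> closedS W \<and> tester_state (fst C) c d T)"

lemma tester_inv_red:
  assumes "\<forall>v. \<delta> v \<ge> 1" and "red I \<delta> C C'" and "tester_inv c d C"
  shows "tester_inv c d C'"
proof -
  obtain W T where C: "snd C = SPar W T" "wf (fst C) W" "closedS W" "tester_state (fst C) c d T"
    using assms(3) by (auto simp: tester_inv_def)
  obtain l where l: "\<forall>c v. l \<noteq> AIn c v" "trans I \<delta> (fst C) (SPar W T) l (snd C')"
    and env: "fst C' = updA \<delta> l (fst C)"
    using assms(2) C(1) by (auto simp: red_def)
  have W_step: "wf (updA \<delta> l' (fst C)) W' \<and> closedS W'" if "trans I \<delta> (fst C) W l' W'" for l' W'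
    using trans_preserves_wf_closed[OF that assms(1) C(2,3)] .
  have T_step: "tester_state (updA \<delta> l' (fst C)) c d T'" if "trans I \<delta> (fst C) T l' T'" for l' T'
    using tester_state_step[OF that C(4)] .
  from l(2) show ?thesis
  proof (cases rule: trans_SParE)
    case (Sync1 e v W' T')
    then show ?thesis
      using W_step[of "AOut e v" W'] T_step[of "AIn e v" T'] env by (auto simp: tester_inv_def)
  next
    case (Sync2 e v W' T')
    then show ?thesis
      using W_step[of "AIn e v" W'] T_step[of "AOut e v" T'] env by (auto simp: tester_inv_def)
  next
    case (TimePar W' T')
    then show ?thesis using W_step[of ASig W'] T_step[of ASig T'] env by (auto simp: tester_inv_def)
  next
    case (TauPar1 W')
    then show ?thesis using W_step[of ATau W'] C env by (auto simp: tester_inv_def)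
  next
    case (TauPar2 T')
    then show ?thesis using T_step[of ATau T'] C env by (auto simp: tester_inv_def)
  qed (use l(1) in auto)
qed

lemma tester_inv_reds:
  assumes "\<forall>v. \<delta> v \<ge> 1"
  shows "(red I \<delta>)\<^sup>*\<^sup>* C C' \<Longrightarrow> tester_inv c d C \<Longrightarrow> tester_inv c d C'"
  by (induction rule: rtranclp_induct) (auto intro: tester_inv_red[OF assms])

lemma trans_beacon_step_out:
  "trans I \<delta> \<Gamma> (SP (beacon_step d (beacon d))) (AOut d Err) (SP (sigpow (\<delta> Err) (beacon d)))"
  unfolding beacon_step_def by (rule trans.Snd) simp

lemma trans_beacon_out:
  "trans I \<delta> \<Gamma> (SP (beacon d)) (AOut d Err) (SP (sigpow (\<delta> Err) (beacon d)))"
proof -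
  have "trans I \<delta> \<Gamma> (SP (substX undefined (beacon d) (beacon_step d (PVar undefined))))
      (AOut d Err) (SP (sigpow (\<delta> Err) (beacon d)))"
    unfolding unfold_beacon by (rule trans_beacon_step_out)
  then show ?thesis unfolding beacon_def by (rule trans.Rec)
qed

lemma beacon_wbarb:
  assumes "\<forall>v. \<delta> v \<ge> 1" and "closedS W" and "T = SP (beacon d) \<or> T = SP (beacon_step d (beacon d))"
  shows "wbarb I \<delta> (\<Gamma>, SPar W T) d"
proof -
  obtain W' where "trans I \<delta> \<Gamma> W (AIn d Err) W'"
    using trans_input[OF assms(2)] by blast
  moreover have "trans I \<delta> \<Gamma> T (AOut d Err) (SP (sigpow (\<delta> Err) (beacon d)))"
    using assms(3) by (elim disjE) (simp_all add: trans_beacon_out trans_beacon_step_out)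
  ultimately have "trans I \<delta> \<Gamma> (SPar W T) (AOut d Err) (SPar W' (SP (sigpow (\<delta> Err) (beacon d))))"
    by (rule trans.Sync2)
  then have "red I \<delta> (\<Gamma>, SPar W T) (sndUpd \<delta> d Err \<Gamma>, SPar W' (SP (sigpow (\<delta> Err) (beacon d))))"
    unfolding red_def by (intro exI[of _ "AOut d Err"]) simp
  moreover have "exposed (sndUpd \<delta> d Err \<Gamma>) d"
    using assms(1) by (simp add: exposed_sndUpd_self)
  ultimately show ?thesis
    unfolding wbarb_def barb_def by (intro exI[of _ "(sndUpd \<delta> d Err \<Gamma>, _)"]) auto
qed

lemma ired_keeps_sleeping:
  assumes "ired I \<delta> C C'" and "snd C = SPar W (SP (PSig P))"
  shows "\<exists>W'. snd C' = SPar W' (SP (PSig P))"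
proof -
  obtain l where "instantaneous l" "trans I \<delta> (fst C) (SPar W (SP (PSig P))) l (snd C')"
    using assms by (auto simp: ired_def)
  then show ?thesis
    by (elim trans_SParE) (auto simp: instantaneous_def elim: trans_PSigE)
qed

lemma ireds_keep_sleeping:
  "(ired I \<delta>)\<^sup>*\<^sup>* C C' \<Longrightarrow> snd C = SPar W (SP (PSig P)) \<Longrightarrow> \<exists>W'. snd C' = SPar W' (SP (PSig P))"
  by (induction rule: rtranclp_induct) (auto dest: ired_keeps_sleeping)

lemma trans_wakes_sleeping:
  "trans I \<delta> \<Gamma> (SPar W (SP (PSig P))) ASig W'' \<Longrightarrow> \<exists>W'. W'' = SPar W' (SP P)"
  by (elim trans_SParE) (auto elim: trans_PSigE)

lemma sigpow_beacon_wbarb: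
  assumes "\<forall>v. \<delta> v \<ge> 1"
  shows "wf \<Gamma> W \<Longrightarrow> closedS W \<Longrightarrow> wbarb I \<delta> (\<Gamma>, SPar W (SP (sigpow j (beacon d)))) d"
proof (induction j arbitrary: \<Gamma> W)
  case 0
  then show ?case using beacon_wbarb[OF assms \<open>closedS W\<close> disjI1[OF refl]] by simp
next
  case (Suc k)
  let ?W0 = "SPar W (SP (PSig (sigpow k (beacon d))))"
  have "wf \<Gamma> ?W0" "closedS ?W0" using Suc.prems by simp_all
  then obtain \<Gamma>' W1 W2 where steps: "(ired I \<delta>)\<^sup>*\<^sup>* (\<Gamma>, ?W0) (\<Gamma>', W1)" and "wf \<Gamma>' W1" "closedS W1"
    and tick: "trans I \<delta> \<Gamma>' W1 ASig W2"
    using well_timed[OF assms] by blast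
  obtain W' where "W1 = SPar W' (SP (PSig (sigpow k (beacon d))))"
    using ireds_keep_sleeping[OF steps] by auto
  then obtain W'' where W2: "W2 = SPar W'' (SP (sigpow k (beacon d)))"
    using trans_wakes_sleeping tick by blast
  have "wf (updA \<delta> ASig \<Gamma>') W2 \<and> closedS W2"
    using trans_preserves_wf_closed[OF tick assms] \<open>wf \<Gamma>' W1\<close> \<open>closedS W1\<close> by blast
  then have "wbarb I \<delta> (updA \<delta> ASig \<Gamma>', W2) d"
    using Suc.IH unfolding W2 by simp
  moreover have "red I \<delta> (\<Gamma>', W1) (updA \<delta> ASig \<Gamma>', W2)"
    using tick by (auto simp: red_def)
  ultimately have "wbarb I \<delta> (\<Gamma>, ?W0) d"
    using ireds_imp_reds[OF steps] by (meson wbarb_reds rtranclp.rtrancl_into_rtrancl)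
  then show ?case by simp
qed

lemma tester_inv_wbarb:
  assumes "\<forall>v. \<delta> v \<ge> 1" and "tester_inv c d C"
  shows "wbarb I \<delta> C d"
proof -
  obtain W T where C: "C = (fst C, SPar W T)" and W: "wf (fst C) W" "closedS W"
    and T: "tester_state (fst C) c d T"
    using assms(2) unfolding tester_inv_def by (metis prod.collapse)
  consider "T = tester c d" "exposed (fst C) c" | j where "T = SP (sigpow j (beacon d))"
    | "T = SP (beacon_step d (beacon d))"
    using T unfolding tester_state_def by blast
  then show ?thesis
  proof cases
    case 1
    then have "trans I \<delta> (fst C) T ATau (SP (sigpow 1 (beacon d)))"
      by (simp add: tester_def trans.Then)
    then have "trans I \<delta> (fst C) (SPar W T) ATau (SPar W (SP (sigpow 1 (beacon d))))"
      by (rule trans.TauPar2)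
    then have "red I \<delta> (fst C, SPar W T) (fst C, SPar W (SP (sigpow 1 (beacon d))))"
      unfolding red_def by (intro exI[of _ ATau]) simp
    then show ?thesis
      using sigpow_beacon_wbarb[OF assms(1) W] C by (metis wbarb_reds r_into_rtranclp)
  next
    case 2
    then show ?thesis using sigpow_beacon_wbarb[OF assms(1) W] C by metis
  next
    case 3
    then show ?thesis using beacon_wbarb[OF assms(1) W(2)] C by metis
  qed
qed

lemma tester_exposed_wbarb:
  assumes "\<forall>v. \<delta> v \<ge> 1" and "exposed \<Gamma> c" and "wf \<Gamma> W" and "closedS W"
    and "(red I \<delta>)\<^sup>*\<^sup>* (\<Gamma>, SPar W (tester c d)) C"
  shows "wbarb I \<delta> C d"
proof -
  have "tester_inv c d (\<Gamma>, SPar W (tester c d))"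
    using assms(2-4) by (auto simp: tester_inv_def tester_state_def)
  then have "tester_inv c d C" by (rule tester_inv_reds[OF assms(1,5)])
  then show ?thesis by (rule tester_inv_wbarb[OF assms(1)])
qed

lemma tester_idle_silent:
  assumes "\<forall>v. \<delta> v \<ge> 1" and "idle \<Gamma> c" and "wf \<Gamma> W" and "closedS W" and "d \<notin> chansS W"
  shows "\<exists>C. (red I \<delta>)\<^sup>*\<^sup>* (\<Gamma>, SPar W (tester c d)) C \<and> \<not> wbarb I \<delta> C d"
proof -
  have "trans I \<delta> \<Gamma> (tester c d) ATau (SP (PSig PNil))"
    using assms(2) by (simp add: tester_def trans.Else exposed_iff_not_idle)
  then have "trans I \<delta> \<Gamma> (SPar W (tester c d)) ATau (SPar W (SP (PSig PNil)))"
    by (rule trans.TauPar2)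
  then have "red I \<delta> (\<Gamma>, SPar W (tester c d)) (\<Gamma>, SPar W (SP (PSig PNil)))"
    unfolding red_def by (intro exI[of _ ATau]) simp
  moreover have "wf \<Gamma> (SPar W (SP (PSig PNil)))" "closedS (SPar W (SP (PSig PNil)))"
    and "d \<notin> chansS (SPar W (SP (PSig PNil)))"
    using assms(3-5) by simp_all
  then obtain C where "(red I \<delta>)\<^sup>*\<^sup>* (\<Gamma>, SPar W (SP (PSig PNil))) C" "\<not> wbarb I \<delta> C d"
    by (meson fresh_channel_silenced[OF assms(1)])
  ultimately show ?thesis by (blast intro: converse_rtranclp_into_rtranclp)
qed

theorem mainTheorem13:
  fixes I :: "'f \<Rightarrow> 'd cval list \<Rightarrow> 'd cval"
    and \<delta> :: "'d cval \<Rightarrow> nat"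
    and \<Gamma>1 \<Gamma>2 :: "('c,'d) env"
    and W1 W2 :: "('c,'x,'p,'d,'f) sys"
    and c :: 'c
  assumes chans_inf: "infinite (UNIV :: 'c set)"
    and delta_pos: "\<forall>v. \<delta> v \<ge> 1"
    and cong: "rbc I \<delta> (\<Gamma>1, W1) (\<Gamma>2, W2)"
    and wf1: "wf \<Gamma>1 W1"
    and wf2: "wf \<Gamma>2 W2"
    and idle1: "idle \<Gamma>1 c"
  shows "idle \<Gamma>2 c"
proof (rule ccontr)
  assume "\<not> idle \<Gamma>2 c"
  then have exposed2: "exposed \<Gamma>2 c" by (simp add: exposed_iff_not_idle)
  have closed: "closedS W1" "closedS W2"
    using rbc_configuration[OF cong] by (simp_all add: configuration_def)
  obtain d where fresh: "d \<notin> chansS W1"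
    using ex_new_if_finite[OF chans_inf finite_chansS] by blast
  have tested: "rbc I \<delta> (\<Gamma>1, SPar W1 (tester c d)) (\<Gamma>2, SPar W2 (tester c d))"
    using rbc_contextual[OF cong closedS_tester] .
  obtain C1 where C1: "(red I \<delta>)\<^sup>*\<^sup>* (\<Gamma>1, SPar W1 (tester c d)) C1" "\<not> wbarb I \<delta> C1 d"
    using tester_idle_silent[OF delta_pos idle1 wf1 closed(1) fresh] by blast
  obtain C2 where reach: "(red I \<delta>)\<^sup>*\<^sup>* (\<Gamma>2, SPar W2 (tester c d)) C2" and related: "rbc I \<delta> C1 C2"
    using rbc_reds[OF C1(1) tested] by blast
  have "wbarb I \<delta> C2 d"
    using reach by (rule tester_exposed_wbarb[OF delta_pos exposed2 wf2 closed(2)])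
  then have "wbarb I \<delta> C1 d"
    by (rule rbc_wbarb[OF related])
  with C1(2) show False ..
qed

end
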